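(* In the setup below, for every $\omega\in\Omega$ with $p(\omega|x)>0$, $$I_\omega(|\Psi_x^{SE}\rangle):=4\,\langle\partial_x^\perp\Psi_x^{SE}|(\mathbb I\otimes|\pi_\omega^E\rangle\langle\pi_\omega^E|)|\partial_x^\perp\Psi_x^{SE}\rangle\ \ge\ p(\omega|x)\,I(\sigma_{x|\omega})+\frac{(\partial_xp(\omega|x))^2}{p(\omega|x)} .$$ Consequently, for any subset $\checkmark\subseteq\Omega$ of outcomes with $p(\omega|x)>0$ for $\omega\in\checkmark$, $I(|\Psi_x^{SE}\rangle)\ge\sum_{\omega\in\checkmark}p(\omega|x)I(\sigma_{x|\omega})$.
   Context: Setup: finite-dimensional $\mathcal H_S,\mathcal H_E$; unit vectors $|\psi_i\rangle\in\mathcal H_S$, $|\phi_i^E\rangle\in\mathcal H_E$; a $C^1$ family of unitaries $U_x^{SE}$ on $\mathcal H_S\otimes\mathcal H_E$; an orthonormal basis $\{|\pi_\omega^E\rangle\}_{\omega\in\Omega}$ of $\mathcal H_E$. $|\Psi_x^{SE}\rangle=U_x^{SE}(|\psi_i\rangle\otimes|\phi_i^E\rangle)$ and $|\partial_x^\perp\Psi_x^{SE}\rangle=|\partial_x\Psi_x^{SE}\rangle-|\Psi_x^{SE}\rangle\langle\Psi_x^{SE}|\partial_x\Psi_x^{SE}\rangle$. $M_{\omega,x}=\langle\pi_\omega^E|U_x^{SE}|\phi_i^E\rangle$, $|\tilde\psi_{x|\omega}\rangle=M_{\omega,x}|\psi_i\rangle$, $p(\omega|x)=\|\tilde\psi_{x|\omega}\|^2$,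 $\sigma_{x|\omega}=|\tilde\psi_{x|\omega}\rangle\langle\tilde\psi_{x|\omega}|/p(\omega|x)$. QFI of a normalized pure state: $I(|\phi_x\rangle)=4(\langle\partial_x\phi_x|\partial_x\phi_x\rangle-|\langle\phi_x|\partial_x\phi_x\rangle|^2)$. *)

theory Defs
  imports "HOL-Analysis.Analysis"
begin

text \<open>Finite-dimensional Hilbert spaces are modelled as complex^'n for finite index types;
  H_S (x) H_E is complex^('s \<times> 'e); operators are matrices complex^'n^'n.\<close>

definition braket :: "complex^'n \<Rightarrow> complex^'n \<Rightarrow> complex" where
  "braket u v = (\<Sum>i\<in>UNIV. cnj (u$i) * v$i)"

definition csmult :: "complex \<Rightarrow> complex^'n \<Rightarrow> complex^'n" where
  "csmult c v = (\<chi> i. c * v$i)"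

definition tens :: "complex^'s \<Rightarrow> complex^'e \<Rightarrow> complex^('s \<times> 'e)" where
  "tens a b = (\<chi> ij. a$(fst ij) * b$(snd ij))"

definition adjoint_mat :: "complex^'n^'m \<Rightarrow> complex^'m^'n" where
  "adjoint_mat A = (\<chi> i j. cnj (A$j$i))"

definition unitary_mat :: "complex^'n^'n \<Rightarrow> bool" where
  "unitary_mat U \<longleftrightarrow> adjoint_mat U ** U = mat 1"

definition QFI_pure :: "(real \<Rightarrow> complex^'n) \<Rightarrow> real \<Rightarrow> real" where
  "QFI_pure f x = (let d = vector_derivative f (at x) in
      4 * (Re (braket d d) - (cmod (braket (f x) d))^2))"

definition Psi :: "(real \<Rightarrow> complex^('s\<times>'e)^('s\<times>'e)) \<Rightarrow> complex^'s \<Rightarrow> complex^'e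
    \<Rightarrow> real \<Rightarrow> complex^('s\<times>'e)" where
  "Psi U \<psi> \<phi> x = U x *v tens \<psi> \<phi>"

definition dPerp :: "(real \<Rightarrow> complex^'n) \<Rightarrow> real \<Rightarrow> complex^'n" where
  "dPerp f x = (let d = vector_derivative f (at x) in d - csmult (braket (f x) d) (f x))"

text \<open>Kraus operator M_{w,x} = <pi_w| U_x |phi>, an operator on H_S.\<close>
definition kraus :: "(real \<Rightarrow> complex^('s\<times>'e)^('s\<times>'e)) \<Rightarrow> complex^'e \<Rightarrow> complex^'e
    \<Rightarrow> real \<Rightarrow> complex^'s^'s" where
  "kraus U \<phi> \<pi> x = (\<chi> i k. \<Sum>j\<in>UNIV. \<Sum>j'\<in>UNIV. cnj (\<pi>$j) * (U x)$(i,j)$(k,j') * \<phi>$j')"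

definition psit :: "(real \<Rightarrow> complex^('s\<times>'e)^('s\<times>'e)) \<Rightarrow> complex^'s \<Rightarrow> complex^'e
    \<Rightarrow> complex^'e \<Rightarrow> real \<Rightarrow> complex^'s" where
  "psit U \<psi> \<phi> \<pi> x = kraus U \<phi> \<pi> x *v \<psi>"

definition prob :: "(real \<Rightarrow> complex^('s\<times>'e)^('s\<times>'e)) \<Rightarrow> complex^'s \<Rightarrow> complex^'e
    \<Rightarrow> complex^'e \<Rightarrow> real \<Rightarrow> real" where
  "prob U \<psi> \<phi> \<pi> x = (norm (psit U \<psi> \<phi> \<pi> x))^2"

text \<open>QFI of the pure conditional state sigma_{x|w} = |psit><psit|/p, computed from the
  normalized state vector psit/sqrt p (the pure-state QFI is phase invariant).\<close>
definition QFI_cond :: "(real \<Rightarrow> complex^('s\<times>'e)^('s\<times>'e)) \<Rightarrow> complex^'s \<Rightarrow> complex^'e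
    \<Rightarrow> complex^'e \<Rightarrow> real \<Rightarrow> real" where
  "QFI_cond U \<psi> \<phi> \<pi> x =
     QFI_pure (\<lambda>t. (1 / sqrt (prob U \<psi> \<phi> \<pi> t)) *\<^sub>R psit U \<psi> \<phi> \<pi> t) x"

text \<open>(I (x) |pi><pi|) applied to a vector.\<close>
definition proj_E :: "complex^'e::finite \<Rightarrow> complex^('s::finite\<times>'e) \<Rightarrow> complex^('s\<times>'e)" where
  "proj_E \<pi> v = (\<chi> ij. \<pi>$(snd ij) * (\<Sum>j'\<in>UNIV. cnj (\<pi>$j') * v$(fst ij, j')))"

definition I_omega :: "(real \<Rightarrow> complex^('s\<times>'e)^('s\<times>'e)) \<Rightarrow> complex^'s \<Rightarrow> complex^'e
    \<Rightarrow> complex^'e \<Rightarrow> real \<Rightarrow> real" where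
  "I_omega U \<psi> \<phi> \<pi> x =
     4 * Re (braket (dPerp (Psi U \<psi> \<phi>) x) (proj_E \<pi> (dPerp (Psi U \<psi> \<phi>) x)))"

end

theory Submission
  imports Defs
begin

(* Let M_w = <pi_w| (x) I be the partial bra on the environment, so that the unnormalised
   conditional state is M_w Psi_x and I_w = 4 |M_w d^perp Psi_x|^2 = 4 |M_w dPsi_x - c M_w Psi_x|^2,
   where c = <Psi_x|dPsi_x> is purely imaginary because Psi_x stays a unit vector.
   For any differentiable vector family f with q = |f x| > 0 and B = <f|f'>, the quantity
   q^2 I(f/q) + (d q^2)^2 / q^2 equals 4 (|f'|^2 - (Im B)^2 / q^2), the minimum of 4 |f' - c f|^2
   over imaginary c; this is the first claim. Summing I_w over the orthonormal basis gives
   4 |d^perp Psi_x|^2 = I(Psi_x) by Parseval, and dropping terms gives the second claim. *)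

lemma braket_add_left: "braket (a + b) c = braket a c + braket b c"
  by (simp add: braket_def distrib_right sum.distrib)

lemma braket_add_right: "braket c (a + b) = braket c a + braket c b"
  by (simp add: braket_def distrib_left sum.distrib)

lemma braket_diff_left: "braket (a - b) c = braket a c - braket b c"
  by (simp add: braket_def left_diff_distrib sum_subtractf)

lemma braket_diff_right: "braket c (a - b) = braket c a - braket c b"
  by (simp add: braket_def right_diff_distrib sum_subtractf)

lemma braket_scaleR_left: "braket (r *\<^sub>R a) c = of_real r * braket a c"
  by (simp add: braket_def sum_distrib_left scaleR_conv_of_real[where 'a=complex] mult_ac)

lemma braket_scaleR_right: "braket c (r *\<^sub>R a) = of_real r * braket c a"
  by (simp add: braket_def sum_distrib_left scaleR_conv_of_real[where 'a=complex] mult_ac)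

lemma braket_csmult_left: "braket (csmult r a) c = cnj r * braket a c"
  by (simp add: braket_def csmult_def sum_distrib_left mult_ac)

lemma braket_csmult_right: "braket c (csmult r a) = r * braket c a"
  by (simp add: braket_def csmult_def sum_distrib_left mult_ac)

lemma braket_commute: "braket b a = cnj (braket a b)"
  by (simp add: braket_def mult.commute)

lemma Re_braket_eq_inner: "Re (braket a b) = inner a b"
  by (simp add: braket_def inner_vec_def inner_complex_def Re_sum)

lemma norm_power2_vec: "norm (v::complex^'n)^2 = (\<Sum>i\<in>UNIV. (cmod (v$i))^2)"
  by (simp add: norm_vec_def L2_set_def sum_nonneg)

lemma braket_self: "braket a a = of_real (norm a ^ 2)"
  unfolding braket_def norm_power2_vec of_real_sum
  by (rule sum.cong) (simp_all add: mult.commute flip: of_real_power complex_norm_square)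

lemma sum_UNIV_prod:
  "(\<Sum>p\<in>(UNIV::('a::finite\<times>'b::finite) set). g p) = (\<Sum>a\<in>UNIV. \<Sum>b\<in>UNIV. g (a,b))"
  by (simp add: UNIV_Times_UNIV[symmetric] sum.cartesian_product del: UNIV_Times_UNIV)

lemma sum_swap3:
  "(\<Sum>k\<in>A. \<Sum>j\<in>B. \<Sum>j'\<in>C. F k j j') = (\<Sum>j\<in>B. \<Sum>j'\<in>C. \<Sum>k\<in>A. F k j j')"
  by (subst sum.swap) (simp add: sum.swap[of _ A])

lemma has_real_derivative_norm_power2:
  fixes f :: "real \<Rightarrow> 'a::real_inner"
  assumes "(f has_vector_derivative f') (at x)"
  shows "((\<lambda>t. norm (f t)^2) has_real_derivative (2 * inner (f x) f')) (at x)"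
  using bounded_bilinear.has_vector_derivative[OF bounded_bilinear_inner assms assms]
  by (simp add: has_real_derivative_iff_has_vector_derivative power2_norm_eq_inner inner_commute)

lemma has_vector_derivative_normalize:
  fixes f :: "real \<Rightarrow> 'a::real_inner"
  assumes df: "(f has_vector_derivative f') (at x)" and nz: "f x \<noteq> 0"
  shows "((\<lambda>t. (1 / sqrt (norm (f t)^2)) *\<^sub>R f t) has_vector_derivative
           ((1 / norm (f x)) *\<^sub>R f' + (- inner (f x) f' / norm (f x)^3) *\<^sub>R f x)) (at x)"
proof -
  define q where "q = norm (f x)"
  have "((\<lambda>t. sqrt (norm (f t)^2)) has_real_derivative inner (f x) f' / q) (at x)"
    using DERIV_chain2[OF DERIV_real_sqrt has_real_derivative_norm_power2[OF df]] nz
    by (simp add: q_def divide_simps)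
  then have "((\<lambda>t. inverse (sqrt (norm (f t)^2))) has_real_derivative - inner (f x) f' / q^3) (at x)"
    by (rule DERIV_cong[OF DERIV_inverse_fun])
      (use nz in \<open>simp_all add: q_def power3_eq_cube divide_simps\<close>)
  from has_vector_derivative_scaleR[OF this df] show ?thesis
    by (simp add: q_def inverse_eq_divide)
qed

lemma QFI_pure_normalize:
  fixes f :: "real \<Rightarrow> complex^'n"
  assumes df: "(f has_vector_derivative f') (at x)" and nz: "f x \<noteq> 0"
  shows "QFI_pure (\<lambda>t. (1 / sqrt (norm (f t)^2)) *\<^sub>R f t) x =
           4 * (norm f'^2 / norm (f x)^2 - (cmod (braket (f x) f'))^2 / norm (f x)^4)"
proof -
  define q where "q = norm (f x)"
  define B where "B = braket (f x) f'"
  define s where "s = 1 / q"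
  define r where "r = - Re B / q^3"
  have q: "q > 0" using nz by (simp add: q_def)
  have ff: "braket (f x) (f x) = of_real (q^2)" and f'f': "braket f' f' = of_real (norm f'^2)"
    by (simp_all add: braket_self q_def)
  have f'f: "braket f' (f x) = cnj B" by (simp add: B_def braket_commute[of f'])
  have "QFI_pure (\<lambda>t. (1 / sqrt (norm (f t)^2)) *\<^sub>R f t) x =
     4 * (Re (braket (s *\<^sub>R f' + r *\<^sub>R f x) (s *\<^sub>R f' + r *\<^sub>R f x))
       - (cmod (braket (s *\<^sub>R f x) (s *\<^sub>R f' + r *\<^sub>R f x)))^2)"
    using vector_derivative_at[OF has_vector_derivative_normalize[OF df nz]] nz
    by (simp add: QFI_pure_def Let_def s_def r_def q_def B_def Re_braket_eq_inner)
  also have "\<dots> = 4 * (s^2 * norm f'^2 + 2 * s * r * Re B + r^2 * q^2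
                       - ((s^2 * Re B + s * r * q^2)^2 + (s^2 * Im B)^2))"
    by (simp add: braket_add_left braket_add_right braket_scaleR_left braket_scaleR_right
        ff f'f' f'f B_def[symmetric] cmod_power2) (simp add: power2_eq_square algebra_simps)
  also have "\<dots> = 4 * (norm f'^2 / q^2 - ((Re B)^2 + (Im B)^2) / q^4)"
    using q by (simp add: s_def r_def field_simps power2_eq_square power3_eq_cube power4_eq_xxxx)
  finally show ?thesis
    by (simp add: cmod_power2 q_def B_def)
qed

lemma norm_diff_imaginary_multiple_ge:
  fixes u v :: "complex^'n"
  assumes "Re c = 0" and "u \<noteq> 0"
  shows "norm v^2 - (Im (braket u v))^2 / norm u^2 \<le> norm (v - csmult c u)^2"
proof -
  define q where "q = norm u"
  define b where "b = Im (braket u v)"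
  have q: "q > 0" using assms(2) by (simp add: q_def)
  obtain \<beta> where c: "c = \<i> * of_real \<beta>"
    using assms(1) by (metis complex_eq mult_zero_left add_0 of_real_0 mult.commute)
  have uu: "braket u u = of_real (q^2)" and vv: "braket v v = of_real (norm v^2)"
    by (simp_all add: braket_self q_def)
  have "norm (v - csmult c u)^2 = Re (braket (v - csmult c u) (v - csmult c u))"
    by (simp add: braket_self)
  also have "\<dots> = norm v^2 - 2 * \<beta> * b + \<beta>^2 * q^2"
    by (simp add: c braket_diff_left braket_diff_right braket_csmult_left
        braket_csmult_right uu vv braket_commute[of v u] b_def power2_eq_square algebra_simps)
  also have "\<dots> = norm v^2 - b^2 / q^2 + (\<beta> * q - b / q)^2"
    using q by (simp add: field_simps power2_eq_square)
  finally show ?thesis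
    by (simp add: q_def b_def)
qed

lemma normalized_QFI_plus_Fisher_le:
  fixes f :: "real \<Rightarrow> complex^'n"
  assumes df: "(f has_vector_derivative f') (at x)" and nz: "f x \<noteq> 0" and c: "Re c = 0"
  shows "norm (f x)^2 * QFI_pure (\<lambda>t. (1 / sqrt (norm (f t)^2)) *\<^sub>R f t) x
           + (deriv (\<lambda>t. norm (f t)^2) x)^2 / norm (f x)^2
         \<le> 4 * norm (f' - csmult c (f x))^2"
proof -
  define q where "q = norm (f x)"
  define B where "B = braket (f x) f'"
  have q: "q > 0" using nz by (simp add: q_def)
  have "deriv (\<lambda>t. norm (f t)^2) x = 2 * Re B"
    using DERIV_imp_deriv[OF has_real_derivative_norm_power2[OF df]]
    by (simp add: B_def Re_braket_eq_inner)
  then have "norm (f x)^2 * QFI_pure (\<lambda>t. (1 / sqrt (norm (f t)^2)) *\<^sub>R f t) x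
           + (deriv (\<lambda>t. norm (f t)^2) x)^2 / norm (f x)^2
        = 4 * (norm f'^2 - (Im B)^2 / q^2)"
    using q unfolding QFI_pure_normalize[OF df nz]
    by (simp add: cmod_power2[of B, unfolded power2_eq_square] field_simps power2_eq_square
        power4_eq_xxxx flip: q_def B_def)
  also have "\<dots> \<le> 4 * norm (f' - csmult c (f x))^2"
    using norm_diff_imaginary_multiple_ge[OF c nz, of f'] by (simp add: q_def B_def)
  finally show ?thesis .
qed

lemma onb_parseval:
  fixes \<pi> :: "'w::finite \<Rightarrow> complex^'e::finite"
  assumes orth: "\<And>w w'. braket (\<pi> w) (\<pi> w') = (if w = w' then 1 else 0)"
    and card: "CARD('w) = CARD('e)"
  shows "(\<Sum>w\<in>UNIV. (cmod (braket (\<pi> w) u))^2) = norm u ^ 2"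
proof -
  obtain h where h: "bij_betw h (UNIV::'e set) (UNIV::'w set)"
    using finite_same_card_bij[of "UNIV::'e set" "UNIV::'w set"] card by auto
  then have h_eq: "h k = h k' \<longleftrightarrow> k = k'" for k k' by (auto simp: bij_betw_def inj_eq)
  define Q :: "complex^'e^'e" where "Q = (\<chi> k j. \<pi> (h k) $ j)"
  have "(\<Sum>j\<in>UNIV. \<pi> (h k) $ j * cnj (\<pi> (h k') $ j)) = (if k = k' then 1 else 0)" for k k'
    using orth[of "h k'" "h k"] by (simp add: braket_def h_eq mult.commute eq_commute)
  then have "Q ** adjoint_mat Q = mat 1"
    by (simp add: Q_def adjoint_mat_def matrix_matrix_mult_def mat_def vec_eq_iff)
  text \<open>A one-sided inverse of a square matrix is two-sided; this is where
    \<open>CARD('w) = CARD('e)\<close> enters.\<close>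
  then have QQ: "adjoint_mat Q ** Q = mat 1" by (simp add: matrix_left_right_inverse)
  have completeness: "(\<Sum>k\<in>UNIV. cnj (\<pi> (h k) $ j) * \<pi> (h k) $ j') = (if j = j' then 1 else 0)"
    for j j'
    using arg_cong[OF QQ, of "\<lambda>M. M $ j $ j'"]
    by (simp add: Q_def adjoint_mat_def matrix_matrix_mult_def mat_def)
  have "complex_of_real (\<Sum>w\<in>UNIV. (cmod (braket (\<pi> w) u))^2)
      = (\<Sum>k\<in>UNIV. braket (\<pi> (h k)) u * cnj (braket (\<pi> (h k)) u))"
    unfolding sum.reindex_bij_betw[OF h, symmetric] of_real_sum
    by (rule sum.cong) (simp_all only: complex_norm_square)
  also have "\<dots> = (\<Sum>k\<in>UNIV. \<Sum>j\<in>UNIV. \<Sum>j'\<in>UNIV.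
                      (u $ j * cnj (u $ j')) * (cnj (\<pi> (h k) $ j) * \<pi> (h k) $ j'))"
    by (simp add: braket_def sum_product cnj_sum mult_ac)
  also have "\<dots> = (\<Sum>j\<in>UNIV. \<Sum>j'\<in>UNIV. (u $ j * cnj (u $ j'))
                    * (\<Sum>k\<in>UNIV. cnj (\<pi> (h k) $ j) * \<pi> (h k) $ j'))"
    by (rule trans[OF sum_swap3]) (simp add: sum_distrib_left)
  also have "\<dots> = (\<Sum>j\<in>UNIV. u $ j * cnj (u $ j))"
    by (simp add: completeness if_distrib[of "\<lambda>z. _ * z"] cong: if_cong)
  also have "\<dots> = braket u u"
    by (simp add: braket_def mult.commute)
  finally show ?thesis by (simp only: braket_self of_real_eq_iff)
qed

definition partial_bra :: "complex^'e::finite \<Rightarrow> complex^('s::finite\<times>'e) \<Rightarrow> complex^'s" where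
  "partial_bra \<pi> v = (\<chi> i. \<Sum>j\<in>UNIV. cnj (\<pi>$j) * v$(i,j))"

lemma bounded_linear_partial_bra: "bounded_linear (partial_bra \<pi>)"
proof -
  have "linear (partial_bra \<pi>)"
    by (rule linearI) (simp_all add: partial_bra_def vec_eq_iff sum.distrib distrib_left
        scaleR_conv_of_real[where 'a=complex] sum_distrib_left mult_ac)
  then show ?thesis by (simp add: linear_conv_bounded_linear)
qed

lemma partial_bra_diff_csmult:
  "partial_bra \<pi> (a - csmult c b) = partial_bra \<pi> a - csmult c (partial_bra \<pi> b)"
  by (simp add: partial_bra_def csmult_def vec_eq_iff right_diff_distrib sum_subtractf
      sum_distrib_left mult_ac)

lemma braket_proj_E: "braket v (proj_E \<pi> v) = braket (partial_bra \<pi> v) (partial_bra \<pi> v)"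
  unfolding braket_def proj_E_def partial_bra_def
  by (simp add: sum_UNIV_prod sum_distrib_left sum_distrib_right mult_ac)
    (rule sum.cong[OF refl], rule sum.swap)

lemma psit_eq_partial_bra_Psi: "psit U \<psi> \<phi> \<pi> t = partial_bra \<pi> (Psi U \<psi> \<phi> t)"
  unfolding psit_def Psi_def kraus_def partial_bra_def
  by (simp add: vec_eq_iff matrix_vector_mult_def tens_def sum_UNIV_prod sum_distrib_left
      sum_distrib_right mult_ac) (intro allI sum.swap)

lemma partial_bra_parseval:
  fixes \<pi> :: "'w::finite \<Rightarrow> complex^'e::finite" and v :: "complex^('s::finite\<times>'e)"
  assumes "\<And>w w'. braket (\<pi> w) (\<pi> w') = (if w = w' then 1 else 0)"
    and "CARD('w) = CARD('e)"
  shows "(\<Sum>w\<in>UNIV. norm (partial_bra (\<pi> w) v)^2) = norm v ^ 2"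
proof -
  define row :: "'s \<Rightarrow> complex^'e" where "row i = (\<chi> j. v $ (i,j))" for i
  have "(\<Sum>w\<in>UNIV. norm (partial_bra (\<pi> w) v)^2)
      = (\<Sum>i\<in>UNIV. \<Sum>w\<in>UNIV. (cmod (braket (\<pi> w) (row i)))^2)"
    by (simp add: norm_power2_vec partial_bra_def braket_def row_def) (rule sum.swap)
  also have "\<dots> = norm v ^ 2"
    by (simp add: onb_parseval[OF assms] norm_power2_vec row_def sum_UNIV_prod)
  finally show ?thesis .
qed

lemma norm_unitary_mat_mult:
  assumes "unitary_mat U"
  shows "norm (U *v (v::complex^'n::finite)) = norm v"
proof -
  have columns: "(\<Sum>i\<in>UNIV. cnj (U $ i $ k) * U $ i $ k') = (if k = k' then 1 else 0)" for k k'
    using arg_cong[OF assms[unfolded unitary_mat_def], of "\<lambda>M. M $ k $ k'"]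
    by (simp add: adjoint_mat_def matrix_matrix_mult_def mat_def)
  have "braket (U *v v) (U *v v)
      = (\<Sum>i\<in>UNIV. \<Sum>k\<in>UNIV. \<Sum>k'\<in>UNIV.
           (cnj (v $ k) * v $ k') * (cnj (U $ i $ k) * U $ i $ k'))"
    by (simp add: braket_def matrix_vector_mult_def sum_product mult_ac)
      (rule sum.cong[OF refl], rule sum.swap)
  also have "\<dots> = (\<Sum>k\<in>UNIV. \<Sum>k'\<in>UNIV.
                      (cnj (v $ k) * v $ k') * (\<Sum>i\<in>UNIV. cnj (U $ i $ k) * U $ i $ k'))"
    by (rule trans[OF sum_swap3]) (simp add: sum_distrib_left)
  also have "\<dots> = braket v v"
    by (simp add: columns braket_def if_distrib[of "\<lambda>z. _ * z"] cong: if_cong)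
  finally have "norm (U *v v) ^ 2 = norm v ^ 2" by (simp only: braket_self of_real_eq_iff)
  then show ?thesis by simp
qed

lemma norm_tens: "norm (tens (a::complex^'s::finite) (b::complex^'e::finite)) = norm a * norm b"
proof -
  have "norm (tens a b) ^ 2 = (norm a * norm b)^2"
    by (simp add: norm_power2_vec tens_def sum_UNIV_prod power_mult_distrib norm_mult sum_product)
  then show ?thesis by simp
qed

lemma bounded_linear_matrix_vector_mult_left:
  "bounded_linear (\<lambda>M::complex^'n::finite^'m::finite. M *v v)"
proof -
  have "linear (\<lambda>M::complex^'n^'m. M *v v)"
    by (rule linearI) (simp_all add: matrix_vector_mult_def vec_eq_iff sum.distrib ring_distribs
        scaleR_conv_of_real[where 'a=complex] sum_distrib_left mult_ac)
  then show ?thesis by (simp add: linear_conv_bounded_linear)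
qed

lemma norm_Psi:
  assumes "norm \<psi> = 1" and "norm \<phi> = 1" and "\<And>t. unitary_mat (U t)"
  shows "norm (Psi U \<psi> \<phi> t) = 1"
  by (simp add: Psi_def norm_unitary_mat_mult assms norm_tens)

lemma has_vector_derivative_Psi:
  assumes "(U has_vector_derivative D) (at x)"
  shows "(Psi U \<psi> \<phi> has_vector_derivative D *v tens \<psi> \<phi>) (at x)"
  using bounded_linear.has_vector_derivative[OF bounded_linear_matrix_vector_mult_left assms]
  by (simp add: Psi_def[abs_def])

lemma Re_braket_derivative_unit_family:
  fixes f :: "real \<Rightarrow> complex^'n"
  assumes unit: "\<And>t. norm (f t) = 1" and df: "(f has_vector_derivative d) (at x)"
  shows "Re (braket (f x) d) = 0"
proof -
  have "((\<lambda>t. norm (f t)^2) has_real_derivative 2 * inner (f x) d) (at x)"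
    by (rule has_real_derivative_norm_power2[OF df])
  moreover have "((\<lambda>t. norm (f t)^2) has_real_derivative 0) (at x)"
    by (simp add: unit)
  ultimately have "2 * inner (f x) d = 0" by (rule DERIV_unique)
  then show ?thesis by (simp add: Re_braket_eq_inner)
qed

lemma QFI_pure_unit_family:
  fixes f :: "real \<Rightarrow> complex^'n"
  assumes unit: "\<And>t. norm (f t) = 1" and df: "(f has_vector_derivative d) (at x)"
  shows "QFI_pure f x = 4 * norm (dPerp f x)^2"
proof -
  define c where "c = braket (f x) d"
  have ff: "braket (f x) (f x) = 1" by (simp add: braket_self unit)
  have "norm (dPerp f x)^2 = Re (braket (d - csmult c (f x)) (d - csmult c (f x)))"
    by (simp add: dPerp_def vector_derivative_at[OF df] c_def braket_self)
  also have "\<dots> = Re (braket d d) - (cmod c)^2"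
    by (simp add: braket_diff_left braket_diff_right braket_csmult_left braket_csmult_right ff
        braket_commute[of d "f x"] c_def[symmetric] cmod_power2[of c, unfolded power2_eq_square]
        power2_eq_square)
  finally show ?thesis
    by (simp add: QFI_pure_def vector_derivative_at[OF df] c_def)
qed

lemma I_omega_eq_norm_partial_bra_dPerp:
  "I_omega U \<psi> \<phi> \<pi> x = 4 * norm (partial_bra \<pi> (dPerp (Psi U \<psi> \<phi>) x))^2"
  by (simp add: I_omega_def braket_proj_E braket_self)

lemma I_omega_ge_conditional_QFI:
  assumes unit: "\<And>t. norm (Psi U \<psi> \<phi> t) = 1"
    and dPsi: "(Psi U \<psi> \<phi> has_vector_derivative d) (at x)"
    and pos: "prob U \<psi> \<phi> \<pi> x > 0"
  shows "prob U \<psi> \<phi> \<pi> x * QFI_cond U \<psi> \<phi> \<pi> x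
           + (deriv (\<lambda>t. prob U \<psi> \<phi> \<pi> t) x)^2 / prob U \<psi> \<phi> \<pi> x
         \<le> I_omega U \<psi> \<phi> \<pi> x"
proof -
  define c where "c = braket (Psi U \<psi> \<phi> x) d"
  have c: "Re c = 0"
    using Re_braket_derivative_unit_family[OF unit dPsi] by (simp add: c_def)
  have "psit U \<psi> \<phi> \<pi> = (\<lambda>t. partial_bra \<pi> (Psi U \<psi> \<phi> t))"
    by (simp add: fun_eq_iff psit_eq_partial_bra_Psi)
  then have dpsit: "(psit U \<psi> \<phi> \<pi> has_vector_derivative partial_bra \<pi> d) (at x)"
    using bounded_linear.has_vector_derivative[OF bounded_linear_partial_bra dPsi] by simp
  have nz: "psit U \<psi> \<phi> \<pi> x \<noteq> 0"
    using pos by (auto simp: prob_def)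
  have "I_omega U \<psi> \<phi> \<pi> x = 4 * norm (partial_bra \<pi> d - csmult c (psit U \<psi> \<phi> \<pi> x))^2"
    by (simp add: I_omega_eq_norm_partial_bra_dPerp dPerp_def vector_derivative_at[OF dPsi]
        c_def partial_bra_diff_csmult psit_eq_partial_bra_Psi)
  with normalized_QFI_plus_Fisher_le[OF dpsit nz c] show ?thesis
    by (simp add: prob_def QFI_cond_def)
qed

lemma prob_mult_QFI_cond_le_I_omega:
  assumes "\<And>t. norm (Psi U \<psi> \<phi> t) = 1"
    and "(Psi U \<psi> \<phi> has_vector_derivative d) (at x)"
    and pos: "prob U \<psi> \<phi> \<pi> x > 0"
  shows "prob U \<psi> \<phi> \<pi> x * QFI_cond U \<psi> \<phi> \<pi> x \<le> I_omega U \<psi> \<phi> \<pi> x"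
proof -
  have "0 \<le> (deriv (\<lambda>t. prob U \<psi> \<phi> \<pi> t) x)^2 / prob U \<psi> \<phi> \<pi> x"
    using pos by simp
  with I_omega_ge_conditional_QFI[OF assms] show ?thesis by linarith
qed

lemma QFI_pure_Psi_eq_sum_I_omega:
  fixes \<pi> :: "'w::finite \<Rightarrow> complex^'e::finite"
  assumes unit: "\<And>t. norm (Psi U \<psi> \<phi> t) = 1"
    and dPsi: "(Psi U \<psi> \<phi> has_vector_derivative d) (at x)"
    and "\<And>w w'. braket (\<pi> w) (\<pi> w') = (if w = w' then 1 else 0)"
    and "CARD('w) = CARD('e)"
  shows "QFI_pure (Psi U \<psi> \<phi>) x = (\<Sum>w\<in>UNIV. I_omega U \<psi> \<phi> (\<pi> w) x)"
  by (simp add: QFI_pure_unit_family[OF unit dPsi] I_omega_eq_norm_partial_bra_dPerp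
      partial_bra_parseval[OF assms(3,4)] flip: sum_distrib_left)

theorem mainTheorem5:
  fixes U :: "real \<Rightarrow> complex^('s::finite \<times> 'e::finite)^('s \<times> 'e)"
    and \<psi> :: "complex^'s" and \<phi> :: "complex^'e"
    and \<pi> :: "'w::finite \<Rightarrow> complex^'e"
    and x :: real
  assumes psi_unit: "norm \<psi> = 1"
    and phi_unit: "norm \<phi> = 1"
    and unitary: "\<And>t. unitary_mat (U t)"
    and C1: "U C1_differentiable_on UNIV"
    and onb_orth: "\<And>w w'. braket (\<pi> w) (\<pi> w') = (if w = w' then 1 else 0)"
    and onb_card: "CARD('w) = CARD('e)"
  shows "(\<forall>w. prob U \<psi> \<phi> (\<pi> w) x > 0 \<longrightarrow>
            I_omega U \<psi> \<phi> (\<pi> w) x \<ge>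
              prob U \<psi> \<phi> (\<pi> w) x * QFI_cond U \<psi> \<phi> (\<pi> w) x
              + (deriv (\<lambda>t. prob U \<psi> \<phi> (\<pi> w) t) x)^2 / prob U \<psi> \<phi> (\<pi> w) x)
       \<and> (\<forall>A :: 'w set. (\<forall>w\<in>A. prob U \<psi> \<phi> (\<pi> w) x > 0) \<longrightarrow>
            QFI_pure (Psi U \<psi> \<phi>) x \<ge>
              (\<Sum>w\<in>A. prob U \<psi> \<phi> (\<pi> w) x * QFI_cond U \<psi> \<phi> (\<pi> w) x))"
proof -
  obtain D where "(U has_vector_derivative D) (at x)"
    using C1 unfolding C1_differentiable_on_def by blast
  then have dPsi: "(Psi U \<psi> \<phi> has_vector_derivative D *v tens \<psi> \<phi>) (at x)"
    by (rule has_vector_derivative_Psi)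
  have unit: "\<And>t. norm (Psi U \<psi> \<phi> t) = 1"
    by (rule norm_Psi[OF psi_unit phi_unit unitary])
  have "(\<Sum>w\<in>A. prob U \<psi> \<phi> (\<pi> w) x * QFI_cond U \<psi> \<phi> (\<pi> w) x) \<le> QFI_pure (Psi U \<psi> \<phi>) x"
    if "\<forall>w\<in>A. prob U \<psi> \<phi> (\<pi> w) x > 0" for A
  proof -
    have "(\<Sum>w\<in>A. prob U \<psi> \<phi> (\<pi> w) x * QFI_cond U \<psi> \<phi> (\<pi> w) x)
        \<le> (\<Sum>w\<in>A. I_omega U \<psi> \<phi> (\<pi> w) x)"
      using that by (intro sum_mono prob_mult_QFI_cond_le_I_omega[OF unit dPsi]) blast
    also have "\<dots> \<le> (\<Sum>w\<in>UNIV. I_omega U \<psi> \<phi> (\<pi> w) x)"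
      by (rule sum_mono2) (simp_all add: I_omega_eq_norm_partial_bra_dPerp)
    also have "\<dots> = QFI_pure (Psi U \<psi> \<phi>) x"
      by (rule QFI_pure_Psi_eq_sum_I_omega[OF unit dPsi onb_orth onb_card, symmetric])
    finally show ?thesis .
  qed
  with I_omega_ge_conditional_QFI[OF unit dPsi] show ?thesis by auto
qed

end
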